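(* Let $s\in\mathbb{R}^2$ with $|s|=1$ and $m=s^\perp$. For every $N\in\mathcal{N}_s\setminus\mathcal{M}_s$ there exist $F,G\in\mathcal{M}_s$ with $\operatorname{rank}(F-G)=1$ and $\mu\in(0,1)$ such that $$N=\mu F+(1-\mu)G\qquad\text{and}\qquad|Nm|=|Fm|=|Gm|.$$
   Context: $m=s^\perp=(-s_2,s_1)$; $\mathcal{M}_s=\{F\in\mathbb{R}^{2\times2}:\det F=1,|Fs|=1\}$; $\mathcal{N}_s=\{F\in\mathbb{R}^{2\times2}:\det F=1,|Fs|\le1\}$. *)

theory Defs
  imports "HOL-Analysis.Analysis"
begin

definition perp :: "real^2 \<Rightarrow> real^2" where
  "perp s = vector [- (s $ 2), s $ 1]"

definition Ms :: "real^2 \<Rightarrow> (real^2^2) set" where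
  "Ms s = {F. det F = 1 \<and> norm (F *v s) = 1}"

definition Ns :: "real^2 \<Rightarrow> (real^2^2) set" where
  "Ns s = {F. det F = 1 \<and> norm (F *v s) \<le> 1}"

end

theory Submission
  imports Defs
begin

text \<open>Move \<open>N\<close> along the line \<open>t \<mapsto> N + t (N m) s\<^sup>T\<close> of rank-one perturbations.
  Since \<open>s \<bullet> m = 0\<close>, every matrix on this line has determinant \<open>det N\<close> and maps \<open>m\<close>
  to \<open>N m\<close>, while it maps \<open>s\<close> to \<open>N s + t N m\<close>. As \<open>|N s| < 1\<close> and \<open>N m \<noteq> 0\<close>, this
  point leaves the unit ball on both sides of \<open>t = 0\<close>, at some \<open>a < 0 < b\<close>; the two
  corresponding matrices lie in \<open>M_s\<close>, differ by a rank-one matrix, and have \<open>N\<close>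
  as a strict convex combination.\<close>

definition outer :: "real^'m \<Rightarrow> real^'n \<Rightarrow> real^'n^'m" where
  "outer v s = (\<chi> i j. v $ i * s $ j)"

lemma outer_mult_vec: "outer v s *v x = (s \<bullet> x) *\<^sub>R v"
  by (simp add: outer_def vec_eq_iff matrix_vector_mult_def inner_vec_def sum_distrib_left mult.commute mult.left_commute)

lemma range_outer_mult_vec:
  assumes "s \<noteq> 0"
  shows "range ((*v) (outer v s)) = span {v}"
proof
  show "range ((*v) (outer v s)) \<subseteq> span {v}"
    by (auto simp: outer_mult_vec span_singleton)
  show "span {v} \<subseteq> range ((*v) (outer v s))"
  proof
    fix y assume "y \<in> span {v}"
    then obtain k where "y = k *\<^sub>R v"
      by (auto simp: span_singleton)
    moreover have "outer v s *v ((k / (s \<bullet> s)) *\<^sub>R s) = k *\<^sub>R v"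
      using assms by (simp add: outer_mult_vec)
    ultimately show "y \<in> range ((*v) (outer v s))"
      by (metis rangeI)
  qed
qed

lemma outer_scaleR_left: "outer (c *\<^sub>R v) s = c *\<^sub>R outer v s"
  by (simp add: outer_def vec_eq_iff)

lemma rank_outer:
  assumes "v \<noteq> 0" "s \<noteq> 0"
  shows "rank (outer v s) = 1"
  using assms by (simp add: rank_dim_range range_outer_mult_vec)

lemma ray_meets_unit_sphere:
  fixes w u :: "'a::real_normed_vector"
  assumes "norm w < 1" "u \<noteq> 0"
  obtains t where "t > 0" "norm (w + t *\<^sub>R u) = 1"
proof -
  define b where "b = 2 / norm u"
  have "b > 0" using assms(2) by (simp add: b_def)
  have "norm (b *\<^sub>R u) - norm w \<le> norm (w + b *\<^sub>R u)"
    by (metis add.commute norm_diff_ineq)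
  moreover have "norm (b *\<^sub>R u) = 2" using assms(2) \<open>b > 0\<close> by (simp add: b_def)
  ultimately have "1 \<le> norm (w + b *\<^sub>R u)" using assms(1) by linarith
  moreover have "continuous_on {0..b} (\<lambda>t. norm (w + t *\<^sub>R u))"
    by (intro continuous_intros)
  ultimately obtain t where "0 \<le> t" "norm (w + t *\<^sub>R u) = 1"
    using IVT'[of "\<lambda>t. norm (w + t *\<^sub>R u)" 0 1 b] assms(1) \<open>b > 0\<close> by auto
  moreover have "t \<noteq> 0" using calculation assms(1) by auto
  ultimately show thesis by (intro that[of t]) auto
qed

lemma line_crosses_unit_sphere:
  fixes w u :: "'a::real_normed_vector"
  assumes "norm w < 1" "u \<noteq> 0"
  obtains a b where "a < 0" "0 < b" "norm (w + a *\<^sub>R u) = 1" "norm (w + b *\<^sub>R u) = 1"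
proof -
  obtain b where "0 < b" "norm (w + b *\<^sub>R u) = 1"
    using ray_meets_unit_sphere[OF assms] .
  moreover obtain a where "0 < a" "norm (w + a *\<^sub>R (- u)) = 1"
    using ray_meets_unit_sphere[OF assms(1)] assms(2) by (metis neg_equal_0_iff_equal)
  ultimately show thesis
    using that[of "- a" b] by simp
qed

lemma convex_combination_on_line:
  fixes x d :: "'a::real_vector"
  assumes "a < 0" "0 < b"
  obtains \<mu> where "0 < \<mu>" "\<mu> < 1" "x = \<mu> *\<^sub>R (x + b *\<^sub>R d) + (1 - \<mu>) *\<^sub>R (x + a *\<^sub>R d)"
proof
  define \<mu> where "\<mu> = - a / (b - a)"
  show "0 < \<mu>" "\<mu> < 1" using assms by (auto simp: \<mu>_def field_simps)
  have "\<mu> * b + (1 - \<mu>) * a = 0" using assms by (simp add: \<mu>_def field_simps)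
  then have "\<mu> *\<^sub>R (b *\<^sub>R d) + (1 - \<mu>) *\<^sub>R (a *\<^sub>R d) = 0"
    by (metis scaleR_scaleR scaleR_left_distrib scaleR_zero_left)
  then show "x = \<mu> *\<^sub>R (x + b *\<^sub>R d) + (1 - \<mu>) *\<^sub>R (x + a *\<^sub>R d)"
    by (simp add: algebra_simps)
qed

lemma matrix_add_scaleR_outer_mult_vec:
  "(A + t *\<^sub>R outer u s) *v x = A *v x + (t * (s \<bullet> x)) *\<^sub>R u"
  by (simp add: matrix_vector_mult_add_rdistrib scaleR_matrix_vector_assoc[symmetric] outer_mult_vec)

lemma matrix_mult_outer: "A ** outer v s = outer (A *v v) s"
  by (simp add: outer_def matrix_matrix_mult_def matrix_vector_mult_def vec_eq_iff sum_distrib_right mult.assoc)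

lemma det_id_plus_outer_2:
  fixes m s :: "real^2"
  shows "det (mat 1 + outer m s) = 1 + s \<bullet> m"
  by (simp add: det_2 outer_def mat_def inner_vec_def sum_2 algebra_simps)

lemma det_add_outer_orthogonal_2:
  fixes N :: "real^2^2"
  assumes "s \<bullet> m = 0"
  shows "det (N + outer (N *v m) s) = det N"
proof -
  have "N + outer (N *v m) s = N ** (mat 1 + outer m s)"
    by (simp add: matrix_add_ldistrib matrix_mult_outer)
  then show ?thesis
    using assms by (simp add: det_mul det_id_plus_outer_2)
qed

lemma inner_perp_right: "s \<bullet> perp s = 0"
  by (simp add: perp_def inner_vec_def sum_2)

lemma perp_eq_0_iff: "perp s = 0 \<longleftrightarrow> s = 0"
  by (auto simp: perp_def vec_eq_iff forall_2)

lemma det_add_scaleR_outer_perp_2: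
  fixes N :: "real^2^2"
  shows "det (N + t *\<^sub>R outer (N *v perp s) s) = det N"
  using det_add_outer_orthogonal_2[of s "t *\<^sub>R perp s" N]
  by (simp add: inner_perp_right matrix_vector_mult_scaleR outer_scaleR_left)

lemma det_nonzero_mult_vec_eq_0:
  fixes A :: "real^'n^'n"
  assumes "det A \<noteq> 0" "A *v x = 0"
  shows "x = 0"
proof -
  have "inj ((*v) A)"
    using assms(1) by (simp add: invertible_det_nz inj_matrix_vector_mult)
  then show ?thesis
    using assms(2) by (metis injD matrix_vector_mult_0_right)
qed

theorem lemma3p3:
  fixes s :: "real^2" and N :: "real^2^2"
  assumes "norm s = 1"
    and "N \<in> Ns s - Ms s"
  shows "\<exists>F G \<mu>. F \<in> Ms s \<and> G \<in> Ms s \<and> rank (F - G) = 1 \<and>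
           0 < \<mu> \<and> \<mu> < 1 \<and> N = \<mu> *\<^sub>R F + (1 - \<mu>) *\<^sub>R G \<and>
           norm (N *v perp s) = norm (F *v perp s) \<and>
           norm (F *v perp s) = norm (G *v perp s)"
proof -
  have detN: "det N = 1" and Ns_short: "norm (N *v s) < 1"
    using assms(2) by (auto simp: Ns_def Ms_def)
  have "s \<noteq> 0" "s \<bullet> s = 1"
    using assms(1) by (auto simp: norm_eq_1)
  define u where "u = N *v perp s"
  have "u \<noteq> 0"
    using det_nonzero_mult_vec_eq_0[of N "perp s"] detN \<open>s \<noteq> 0\<close> by (auto simp: u_def perp_eq_0_iff)
  define M where "M t = N + t *\<^sub>R outer u s" for t
  have M_perp: "M t *v perp s = u" for t
    by (simp add: M_def u_def matrix_add_scaleR_outer_mult_vec inner_perp_right)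
  have M_in_Ms: "M t \<in> Ms s" if "norm (N *v s + t *\<^sub>R u) = 1" for t
    using that detN \<open>s \<bullet> s = 1\<close>
    by (simp add: Ms_def M_def u_def det_add_scaleR_outer_perp_2 matrix_add_scaleR_outer_mult_vec)
  obtain a b where "a < 0" "0 < b" "norm (N *v s + a *\<^sub>R u) = 1" "norm (N *v s + b *\<^sub>R u) = 1"
    using line_crosses_unit_sphere[OF Ns_short \<open>u \<noteq> 0\<close>] .
  moreover obtain \<mu> where "0 < \<mu>" "\<mu> < 1" "N = \<mu> *\<^sub>R M b + (1 - \<mu>) *\<^sub>R M a"
    using convex_combination_on_line[OF \<open>a < 0\<close> \<open>0 < b\<close>, of N "outer u s"]
    unfolding M_def by blast
  moreover have "M b - M a = outer ((b - a) *\<^sub>R u) s"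
    unfolding outer_scaleR_left by (simp add: M_def algebra_simps)
  then have "rank (M b - M a) = 1"
    using rank_outer[of "(b - a) *\<^sub>R u" s] \<open>u \<noteq> 0\<close> \<open>s \<noteq> 0\<close> \<open>a < 0\<close> \<open>0 < b\<close> by simp
  ultimately show ?thesis
    using M_in_Ms M_perp u_def
    by (intro exI[of _ "M b"] exI[of _ "M a"] exI[of _ \<mu>]) simp
qed

end
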